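(* Let $\mathcal N=\{N_1,\ldots,N_\ell\}$ be a family of $k$-sets satisfying properties (i) and (ii) below with $\ell\ge4$, and fix any run of the decomposition process described in the context, with its stages $0,\ldots,t$, numbers $\ell_0\ge\cdots\ge\ell_t$ and kernel vertices $a_i^{(s)}$. Let $0\le j\le t$, let $1\le i\le \ell_j$, and let $Y\subseteq N_i$ with $|Y|\le j$. Then there exists a $3$-element set $C\subseteq \bigl(N_i\cup\{a_i^{(0)},\ldots,a_i^{(j)}\}\bigr)\setminus Y$ such that $C\cap (V\setminus N_r)\ne\varnothing$ for every $r=1,\ldots,\ell$.
   Context: Setting: $k\ge3$, $\mathcal N=\{N_1,\dots,N_\ell\}$ a family of $k$-subsets, $V=\bigcup N_i$, $n=|V|$, $m=n-k$, satisfying (i) $\bigcap_{i}N_i=\varnothing$ but $\bigcap_{j\ne i}N_j\ne\varnothing$ for all $i$; (ii) every $S\subseteq V$ with $|S|\ge k+1$ contains a $3$-set $T$ not contained in any $N_i$. Assume $\ell\ge4$. Decomposition process: Stage $0$: $\ell_0=\ell$, $\mathcal N^{(0)}=\mathcal N$; for each $i\le\ell_0$ choose $a_i^{(0)}\in\bigcap_{r\ne i}N_r$; kernel $A^{(0)}=\{a_1^{(0)},\dots,a_{\ell_0}^{(0)}\}$. Having defined stages $0,\dots,j$ with $\mathcal N^{(j)}$ consisting of (truncations of) $N_1,\dots,N_{\ell_j}$, $\ell_j\ge4$, and kernels $A^{(0)},\dots,A^{(j)}$, consider the remainder family $R^{(j)}=\{N_r\setminus\bigcup_{s\le j}A^{(s)}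 : 1\le r\le \ell_j\}$, which has empty intersection. If every subfamily of $R^{(j)}$ that is minimal with respect to having empty intersection has only $2$ or $3$ members, stop and set $t=j$. Otherwise choose such a minimal subfamily with at least $4$ members; after reindexing the sets of $\mathcal N$ we may assume it consists of the truncations $N_r^{(j+1)}=N_r\setminus\bigcup_{s\le j}A^{(s)}$, $r=1,\dots,\ell_{j+1}$, with $\ell_{j+1}\ge4$; for each $i\le\ell_{j+1}$ choose $a_i^{(j+1)}\in\bigcap_{r\le\ell_{j+1},r\ne i}N_r^{(j+1)}$ and set $A^{(j+1)}=\{a_1^{(j+1)},\dots,a_{\ell_{j+1}}^{(j+1)}\}$. Thus $\ell=\ell_0\ge\ell_1\ge\dots\ge\ell_t\ge4$, and "$N_i\in\mathcal N^{(j)}$" means $i\le\ell_j$. *)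

theory Defs
  imports Main
begin

definition vertex_set :: "(nat \<Rightarrow> 'a set) \<Rightarrow> nat \<Rightarrow> 'a set" where
  "vertex_set N l = (\<Union>r\<in>{1..l}. N r)"

definition good_family :: "nat \<Rightarrow> (nat \<Rightarrow> 'a set) \<Rightarrow> nat \<Rightarrow> bool" where
  "good_family k N l \<longleftrightarrow>
     (\<forall>r\<in>{1..l}. finite (N r) \<and> card (N r) = k) \<and>
     (\<Inter>r\<in>{1..l}. N r) = {} \<and>
     (\<forall>i\<in>{1..l}. (\<Inter>r\<in>{1..l} - {i}. N r) \<noteq> {}) \<and>
     (\<forall>S. S \<subseteq> vertex_set N l \<and> card S \<ge> k + 1 \<longrightarrow>
        (\<exists>T. T \<subseteq> S \<and> card T = 3 \<and> (\<forall>r\<in>{1..l}. \<not> T \<subseteq> N r)))"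

definition kernel :: "(nat \<Rightarrow> nat \<Rightarrow> 'a) \<Rightarrow> (nat \<Rightarrow> nat) \<Rightarrow> nat \<Rightarrow> 'a set" where
  "kernel a L s = a s ` {1..L s}"

definition trunc :: "(nat \<Rightarrow> 'a set) \<Rightarrow> (nat \<Rightarrow> nat \<Rightarrow> 'a) \<Rightarrow> (nat \<Rightarrow> nat) \<Rightarrow> nat \<Rightarrow> nat \<Rightarrow> 'a set" where
  "trunc N a L j r = N r - (\<Union>s<j. kernel a L s)"

definition min_empty_subfamily :: "(nat \<Rightarrow> 'a set) \<Rightarrow> nat set \<Rightarrow> nat set \<Rightarrow> bool" where
  "min_empty_subfamily F I J \<longleftrightarrow>
     J \<subseteq> I \<and> (\<Inter>r\<in>J. F r) = {} \<and> (\<forall>J'. J' \<subset> J \<longrightarrow> (\<Inter>r\<in>J'. F r) \<noteq> {})"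

text \<open>A run of the decomposition process with stages 0..t, numbers L 0 \<ge> ... \<ge> L t
  and kernel vertices a s i (stage s, index i), the indexing of N being the one
  obtained after all reindexings.\<close>
definition decomposition_run ::
  "(nat \<Rightarrow> 'a set) \<Rightarrow> nat \<Rightarrow> nat \<Rightarrow> (nat \<Rightarrow> nat) \<Rightarrow> (nat \<Rightarrow> nat \<Rightarrow> 'a) \<Rightarrow> bool" where
  "decomposition_run N l t L a \<longleftrightarrow>
     L 0 = l \<and>
     (\<forall>j\<le>t. L j \<ge> 4) \<and>
     (\<forall>j<t. L (Suc j) \<le> L j) \<and>
     (\<forall>j\<le>t. \<forall>i\<in>{1..L j}. a j i \<in> (\<Inter>r\<in>{1..L j} - {i}. trunc N a L j r)) \<and>
     (\<forall>j<t. min_empty_subfamily (trunc N a L (Suc j)) {1..L j} {1..L (Suc j)}) \<and>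
     (\<forall>J. min_empty_subfamily (trunc N a L (Suc t)) {1..L t} J \<longrightarrow>
          card J = 2 \<or> card J = 3)"

end

theory Submission
  imports Defs
begin

text \<open>Each kernel vertex \<open>a s i\<close> lies in a truncation of stage \<open>s\<close> other than the
  \<open>i\<close>-th, so it avoids all earlier kernels (making \<open>a 0 i, \<dots>, a j i\<close> pairwise distinct)
  and, as the truncations of stage \<open>s\<close> have empty intersection, it avoids \<open>N i\<close>.
  Adding these \<open>j + 1\<close> vertices to \<open>N i - Y\<close> thus gives at least \<open>k + 1\<close> vertices of
  \<open>V\<close>, among which property (ii) finds a 3-set contained in no \<open>N r\<close>.\<close>

lemma card_Un_Diff_subset_disjoint:
  assumes "finite B" "finite A" "A \<inter> B = {}" "Y \<subseteq> B"
  shows "card ((B \<union> A) - Y) = card B - card Y + card A"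
proof -
  have "(B \<union> A) - Y = (B - Y) \<union> A" using assms(3,4) by blast
  moreover have "card (B - Y) = card B - card Y"
    using assms(1,4) by (meson card_Diff_subset finite_subset)
  moreover have "card ((B - Y) \<union> A) = card (B - Y) + card A"
    using assms(1-3) by (intro card_Un_disjoint) auto
  ultimately show ?thesis by simp
qed

lemma good_family_triple_meets_complements:
  assumes "good_family k N l" "S \<subseteq> vertex_set N l" "k + 1 \<le> card S"
  shows "\<exists>T. card T = 3 \<and> T \<subseteq> S \<and> (\<forall>r\<in>{1..l}. T \<inter> (vertex_set N l - N r) \<noteq> {})"
proof -
  have "\<forall>S. S \<subseteq> vertex_set N l \<and> card S \<ge> k + 1 \<longrightarrow>
      (\<exists>T. T \<subseteq> S \<and> card T = 3 \<and> (\<forall>r\<in>{1..l}. \<not> T \<subseteq> N r))"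
    using assms(1) unfolding good_family_def by (elim conjE)
  then obtain T where "T \<subseteq> S" "card T = 3" "\<forall>r\<in>{1..l}. \<not> T \<subseteq> N r"
    using assms(2,3) by meson
  moreover have "T \<subseteq> vertex_set N l" using \<open>T \<subseteq> S\<close> assms(2) by (rule subset_trans)
  ultimately show ?thesis by (intro exI[of _ T]) auto
qed

lemma decomposition_run_L_antimono:
  assumes "decomposition_run N l t L a" "s \<le> j" "j \<le> t"
  shows "L j \<le> L s"
  using assms(2)
proof (induction rule: dec_induct)
  case base
  show ?case by simp
next
  case (step n)
  then have "L (Suc n) \<le> L n" using assms(1,3) unfolding decomposition_run_def by simp
  with step.IH show ?case by simp
qed

lemma decomposition_run_L_le:
  assumes "decomposition_run N l t L a" "s \<le> t"
  shows "L s \<le> l"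
  using decomposition_run_L_antimono[OF assms(1) _ assms(2), of 0] assms(1)
  unfolding decomposition_run_def by simp

lemma decomposition_run_Inter_trunc_empty:
  assumes "decomposition_run N l t L a" "good_family k N l" "s \<le> t"
  shows "(\<Inter>r\<in>{1..L s}. trunc N a L s r) = {}"
proof (cases s)
  case 0
  then show ?thesis
    using assms(1,2) unfolding decomposition_run_def good_family_def trunc_def by simp
next
  case (Suc s')
  then have "min_empty_subfamily (trunc N a L s) {1..L s'} {1..L s}"
    using assms(1,3) unfolding decomposition_run_def by simp
  then show ?thesis unfolding min_empty_subfamily_def by simp
qed

lemma decomposition_run_kernel_vertex_in_other_trunc:
  assumes "decomposition_run N l t L a" "s \<le> t" "i \<in> {1..L s}"
  obtains r where "r \<in> {1..L s} - {i}" "a s i \<in> trunc N a L s r"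
proof -
  have "4 \<le> L s" using assms(1,2) unfolding decomposition_run_def by simp
  then obtain r where "r \<in> {1..L s} - {i}"
    by (cases "i = 1") (auto intro: that[of 1] that[of 2])
  moreover have "a s i \<in> (\<Inter>r\<in>{1..L s} - {i}. trunc N a L s r)"
    using assms unfolding decomposition_run_def by blast
  ultimately show ?thesis using that by blast
qed

lemma decomposition_run_kernel_vertex_notin_earlier_kernel:
  assumes "decomposition_run N l t L a" "s \<le> t" "i \<in> {1..L s}" "s' < s"
  shows "a s i \<notin> kernel a L s'"
  using decomposition_run_kernel_vertex_in_other_trunc[OF assms(1-3)] assms(4)
  unfolding trunc_def by blast

lemma decomposition_run_kernel_vertex_notin_own:
  assumes "decomposition_run N l t L a" "good_family k N l" "s \<le> t" "i \<in> {1..L s}"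
  shows "a s i \<notin> N i"
proof
  assume "a s i \<in> N i"
  then have "a s i \<in> trunc N a L s i"
    using decomposition_run_kernel_vertex_notin_earlier_kernel[OF assms(1,3,4)]
    unfolding trunc_def by blast
  moreover have "a s i \<in> (\<Inter>r\<in>{1..L s} - {i}. trunc N a L s r)"
    using assms(1,3,4) unfolding decomposition_run_def by blast
  ultimately have "a s i \<in> (\<Inter>r\<in>{1..L s}. trunc N a L s r)" by blast
  then show False using decomposition_run_Inter_trunc_empty[OF assms(1-3)] by blast
qed

lemma decomposition_run_kernel_vertex_in_vertex_set:
  assumes "decomposition_run N l t L a" "s \<le> t" "i \<in> {1..L s}"
  shows "a s i \<in> vertex_set N l"
proof -
  obtain r where "r \<in> {1..L s} - {i}" "a s i \<in> N r"
    using decomposition_run_kernel_vertex_in_other_trunc[OF assms] unfolding trunc_def by blast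
  then show ?thesis
    using decomposition_run_L_le[OF assms(1,2)] unfolding vertex_set_def by force
qed

lemma decomposition_run_index_earlier:
  assumes "decomposition_run N l t L a" "s \<le> j" "j \<le> t" "i \<in> {1..L j}"
  shows "i \<in> {1..L s}"
  using decomposition_run_L_antimono[OF assms(1-3)] assms(4) by simp

lemma decomposition_run_kernel_column_inj:
  assumes "decomposition_run N l t L a" "j \<le> t" "i \<in> {1..L j}"
  shows "inj_on (\<lambda>s. a s i) {..j}"
proof (rule linorder_inj_onI')
  fix s s' assume "s \<in> {..j}" "s' \<in> {..j}" "s < s'"
  then have "a s i \<in> kernel a L s" "a s' i \<notin> kernel a L s"
    using decomposition_run_index_earlier[OF assms(1) _ assms(2,3)] assms(2)
      decomposition_run_kernel_vertex_notin_earlier_kernel[OF assms(1)]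
    unfolding kernel_def by auto
  then show "a s i \<noteq> a s' i" by metis
qed

theorem lemma3:
  fixes N :: "nat \<Rightarrow> 'a set" and k l t j i :: nat
    and L :: "nat \<Rightarrow> nat" and a :: "nat \<Rightarrow> nat \<Rightarrow> 'a" and Y :: "'a set"
  assumes "k \<ge> 3"
    and "good_family k N l"
    and "l \<ge> 4"
    and "decomposition_run N l t L a"
    and "j \<le> t"
    and "i \<in> {1..L j}"
    and "Y \<subseteq> N i"
    and "card Y \<le> j"
  shows "\<exists>C. card C = 3 \<and> C \<subseteq> (N i \<union> {a s i | s. s \<le> j}) - Y \<and>
             (\<forall>r\<in>{1..l}. C \<inter> (vertex_set N l - N r) \<noteq> {})"
proof -
  note run = assms(4) and gf = assms(2)
  have i_earlier: "i \<in> {1..L s}" if "s \<le> j" for s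
    using decomposition_run_index_earlier[OF run that assms(5,6)] .
  have i_index: "i \<in> {1..l}" using i_earlier[of 0] run unfolding decomposition_run_def by simp
  have kernel_vertex: "a s i \<notin> N i" "a s i \<in> vertex_set N l" if "s \<le> j" for s
    using that assms(5) i_earlier[OF that]
      decomposition_run_kernel_vertex_notin_own[OF run gf]
      decomposition_run_kernel_vertex_in_vertex_set[OF run] by simp_all
  define A where "A = {a s i | s. s \<le> j}"
  have "A = (\<lambda>s. a s i) ` {..j}" unfolding A_def by auto
  then have A_finite: "finite A" and A_card: "card A = Suc j"
    using card_image[OF decomposition_run_kernel_column_inj[OF run assms(5,6)]] by simp_all
  have A_disjoint: "A \<inter> N i = {}" and A_vertices: "A \<subseteq> vertex_set N l"
    unfolding A_def using kernel_vertex by auto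
  have Ni_finite: "finite (N i)" and Ni_card: "card (N i) = k"
    and Ni_vertices: "N i \<subseteq> vertex_set N l"
    using gf i_index unfolding good_family_def vertex_set_def by auto
  have card_eq: "card ((N i \<union> A) - Y) = k - card Y + Suc j"
    using card_Un_Diff_subset_disjoint[OF Ni_finite A_finite A_disjoint assms(7)] Ni_card A_card
    by simp
  have "(N i \<union> A) - Y \<subseteq> vertex_set N l" using A_vertices Ni_vertices by blast
  moreover have "k + 1 \<le> card ((N i \<union> A) - Y)" using card_eq assms(8) by linarith
  ultimately show ?thesis unfolding A_def by (rule good_family_triple_meets_complements[OF gf])
qed

end
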